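(* Let $X$ be a Hermitian $N\times N$ matrix with spectral decomposition $X=\sum_j\lambda_jP_j$ (distinct eigenvalues $\lambda_j$, eigenprojectors $P_j$), and let $Z$ be any $N\times N$ complex matrix. Then $$\lim_{\kappa\to\infty}e^{-i\kappa X}e^{i(\kappa X+Z)}=e^{i\mathcal{P}_X(Z)},\qquad \mathcal{P}_X(Z):=\sum_jP_jZP_j.$$ *)

theory Defs
  imports "HOL-Analysis.Analysis" "Jordan_Normal_Form.Matrix"
begin

definition adj :: "complex mat \<Rightarrow> complex mat" where
  "adj A = mat (dim_col A) (dim_row A) (\<lambda>(i,j). cnj (A $$ (j,i)))"

definition hermitian_mat :: "complex mat \<Rightarrow> bool" where
  "hermitian_mat A \<longleftrightarrow> square_mat A \<and> adj A = A"

definition mexp :: "complex mat \<Rightarrow> complex mat" where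
  "mexp A = mat (dim_row A) (dim_col A)
      (\<lambda>(i,j). \<Sum>k. (A ^\<^sub>m k) $$ (i,j) / of_nat (fact k))"

definition msum :: "nat \<Rightarrow> ('i \<Rightarrow> complex mat) \<Rightarrow> 'i set \<Rightarrow> complex mat" where
  "msum N f I = mat N N (\<lambda>(a,b). \<Sum>j\<in>I. f j $$ (a,b))"

text \<open>Convergence of a family of N x N matrices (all norms are equivalent
  in finite dimension, so entrywise convergence is convergence).\<close>
definition mat_tendsto :: "nat \<Rightarrow> ('b \<Rightarrow> complex mat) \<Rightarrow> complex mat \<Rightarrow> 'b filter \<Rightarrow> bool" where
  "mat_tendsto N M L F \<longleftrightarrow>
     (\<forall>i<N. \<forall>j<N. ((\<lambda>x. M x $$ (i,j)) \<longlongrightarrow> L $$ (i,j)) F)"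

end

theory Submission
  imports Defs
begin

(* Write x = iX, z = iZ and d = i P_X(Z). The spectral decomposition of X makes exp (t x)
   bounded in t, makes d commute with x, and solves the commutator equation [x, a] = d - z by
   a = sum over j ~= k of P_j Z P_k / (lam_k - lam_j). Hence S = 1 + a/kappa almost intertwines
   kappa x + z with kappa x + d, with defect O(1/kappa). A Duhamel estimate, which also yields an
   a priori bound on exp (s (kappa x + z)) for 0 <= s <= 1 by bootstrapping, then gives
   exp (kappa x + z) S = S exp (kappa x) exp d + O(1/kappa), so that
   exp (-kappa x) exp (kappa x + z) = exp d + O(1/kappa).
   The exponential of Banach algebras becomes available by embedding N x N matrices into the
   bounded operators on the bounded sequences nat => complex. *)

section \<open>Exponentials in Banach algebras\<close>

lemma exp_minus_mult_exp:
  fixes x :: "'a::{real_normed_algebra_1,banach}"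
  shows "exp (- x) * exp x = 1"
  using exp_minus_inverse[of "- x"] by simp

lemma exp_scaleR_unique:
  fixes x :: "'a::{real_normed_algebra_1,banach}"
  assumes F': "\<And>t. (F has_vector_derivative x * F t) (at t)" and F0: "F 0 = 1"
  shows "F t = exp (t *\<^sub>R x)"
proof -
  have "((\<lambda>t. exp (t *\<^sub>R (- x)) * F t) has_derivative (\<lambda>h. 0)) (at t)" for t
  proof -
    have "((\<lambda>t. exp (t *\<^sub>R (- x)) * F t) has_vector_derivative
        exp (t *\<^sub>R (- x)) * (x * F t) + exp (t *\<^sub>R (- x)) * (- x) * F t) (at t)"
      by (intro has_vector_derivative_mult exp_scaleR_has_vector_derivative_right F')
    then show ?thesis
      by (simp add: has_vector_derivative_def mult.assoc)
  qed
  then obtain c where "\<And>t. exp (t *\<^sub>R (- x)) * F t = c"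
    using has_derivative_zero_constant[of UNIV "\<lambda>t. exp (t *\<^sub>R (- x)) * F t"] by auto
  from this[of t] this[of 0] have "exp (t *\<^sub>R (- x)) * F t = 1"
    by (simp add: F0)
  moreover have "F t = exp (t *\<^sub>R x) * (exp (t *\<^sub>R (- x)) * F t)"
    by (simp add: mult.assoc[symmetric] exp_minus_inverse)
  ultimately show ?thesis
    by simp
qed

lemma norm_exp_conj_sub_le:
  fixes M N S :: "'a::{real_normed_algebra_1,banach}"
  assumes t: "0 \<le> t"
    and exp_M: "\<And>s. 0 \<le> s \<Longrightarrow> s \<le> t \<Longrightarrow> norm (exp (s *\<^sub>R M)) \<le> K"
    and exp_N: "\<And>s. 0 \<le> s \<Longrightarrow> s \<le> t \<Longrightarrow> norm (exp (- (s *\<^sub>R N))) \<le> C"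
  shows "norm (exp (t *\<^sub>R M) * S * exp (- (t *\<^sub>R N)) - S) \<le> K * norm (M * S - S * N) * C * t"
proof (cases "t = 0")
  case False
  define f where "f s = exp (s *\<^sub>R M) * S * exp (s *\<^sub>R (- N))" for s
  define f' where "f' s = exp (s *\<^sub>R M) * (M * S - S * N) * exp (s *\<^sub>R (- N))" for s
  have der: "(f has_vector_derivative f' s) (at s)" for s
  proof -
    have "(f has_vector_derivative
        exp (s *\<^sub>R M) * S * (- N * exp (s *\<^sub>R (- N))) + exp (s *\<^sub>R M) * M * S * exp (s *\<^sub>R (- N))) (at s)"
      unfolding f_def
      by (intro has_vector_derivative_mult has_vector_derivative_mult_left
          exp_scaleR_has_vector_derivative_right exp_scaleR_has_vector_derivative_left)
    then show ?thesis
      by (simp add: f'_def algebra_simps)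
  qed
  have "norm (f t - f 0) \<le> K * norm (M * S - S * N) * C * t - K * norm (M * S - S * N) * C * 0"
  proof (rule differentiable_bound_general[where f' = f'])
    show "continuous_on {0..t} f"
      using der by (intro continuous_at_imp_continuous_on) (auto intro: has_vector_derivative_continuous)
    fix s assume s: "0 < s" "s < t"
    then have "norm (f' s) \<le> norm (exp (s *\<^sub>R M)) * norm (M * S - S * N) * norm (exp (- (s *\<^sub>R N)))"
      unfolding f'_def by (simp add: norm_mult_ineq order_trans[OF norm_mult_ineq] mult_right_mono)
    also have "\<dots> \<le> K * norm (M * S - S * N) * C"
      using s exp_M[of s] exp_N[of s] order_trans[OF norm_ge_zero exp_M[of s]]
      by (intro mult_mono) auto
    finally show "norm (f' s) \<le> K * norm (M * S - S * N) * C" .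
  qed (use False t der in \<open>auto intro!: derivative_eq_intros continuous_intros\<close>)
  then show ?thesis
    by (simp add: f_def)
qed simp

lemma norm_exp_le_of_almost_similar:
  fixes M N b :: "'a::{real_normed_algebra_1,banach}"
  assumes exp_N: "\<And>s. 0 \<le> s \<Longrightarrow> s \<le> 1 \<Longrightarrow> norm (exp (s *\<^sub>R N)) \<le> C"
    and exp_minus_N: "\<And>s. 0 \<le> s \<Longrightarrow> s \<le> 1 \<Longrightarrow> norm (exp (- (s *\<^sub>R N))) \<le> C"
    and small: "norm (M * (1 + b) - (1 + b) * N) * C * C + norm b \<le> 1/2"
    and t: "0 \<le> t" "t \<le> 1"
  shows "norm (exp (t *\<^sub>R M)) \<le> 2 * norm (1 + b) * C"
proof -
  define S where "S = 1 + b"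
  define v where "v = M * S - S * N"
  define K where "K = (SUP s\<in>{0..1}. norm (exp (s *\<^sub>R M)))"
  have "bdd_above ((\<lambda>s. norm (exp (s *\<^sub>R M))) ` {0..1})"
  proof (rule bdd_aboveI2)
    fix s :: real assume "s \<in> {0..1}"
    then have "norm (s *\<^sub>R M) \<le> norm M" by (auto intro: mult_left_le_one_le)
    then show "norm (exp (s *\<^sub>R M)) \<le> exp (norm M)"
      using norm_exp[of "s *\<^sub>R M"] by (meson exp_le_cancel_iff order_trans)
  qed
  then have K: "norm (exp (s *\<^sub>R M)) \<le> K" if "0 \<le> s" "s \<le> 1" for s
    unfolding K_def using that by (intro cSUP_upper) auto
  have C: "0 \<le> C" using exp_N[of 0] by simp
  have K0: "0 \<le> K" using K[of 0] by simp
  have "norm (exp (s *\<^sub>R M)) \<le> norm S * C + K / 2" if s: "0 \<le> s" "s \<le> 1" for s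
  proof -
    define Psi where "Psi = exp (s *\<^sub>R M) * S * exp (- (s *\<^sub>R N))"
    have "Psi * exp (s *\<^sub>R N) = exp (s *\<^sub>R M) * S"
      by (simp add: Psi_def mult.assoc exp_minus_mult_exp)
    then have exp_M: "exp (s *\<^sub>R M) = Psi * exp (s *\<^sub>R N) - exp (s *\<^sub>R M) * b"
      by (simp add: S_def algebra_simps)
    have "norm (Psi - S) \<le> K * norm v * C * s"
      unfolding Psi_def v_def using s K exp_minus_N by (intro norm_exp_conj_sub_le) auto
    also have "\<dots> \<le> K * norm v * C"
      using s K0 C by (intro mult_left_le) auto
    finally have "norm Psi \<le> norm S + K * norm v * C"
      by (metis add.commute norm_triangle_sub order_trans add_left_mono)
    then have "norm (exp (s *\<^sub>R M)) \<le> (norm S + K * norm v * C) * C + K * norm b"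
      using exp_M s exp_N[OF s] K[OF s] C
      by (smt (verit) mult_mono norm_ge_zero norm_mult_ineq norm_triangle_ineq4 mult_right_mono)
    also have "\<dots> = norm S * C + K * (norm v * C * C + norm b)"
      by (simp add: algebra_simps)
    also have "\<dots> \<le> norm S * C + K / 2"
      using small K0 unfolding v_def S_def by (simp add: mult_left_mono[of _ "1/2" K, simplified])
    finally show ?thesis .
  qed
  \<comment> \<open>The estimate bounds the finite supremum K in terms of itself.\<close>
  then have "K \<le> norm S * C + K / 2"
    unfolding K_def by (intro cSUP_least) auto
  then show ?thesis
    using K[OF t] by (simp add: S_def)
qed

lemma norm_exp_scaleR_add_commuting_le:
  fixes x d :: "'a::{real_normed_algebra_1,banach}"
  assumes xd: "x * d = d * x" and exp_x: "\<And>t. norm (exp (t *\<^sub>R x)) \<le> C" and s: "\<bar>s\<bar> \<le> 1"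
  shows "norm (exp (s *\<^sub>R (r *\<^sub>R x + d))) \<le> C * exp (norm d)"
proof -
  have "exp (s *\<^sub>R (r *\<^sub>R x + d)) = exp ((s * r) *\<^sub>R x) * exp (s *\<^sub>R d)"
    unfolding scaleR_add_right by (simp add: exp_add_commuting xd mult_scaleR_left mult_scaleR_right)
  moreover have "norm (exp (s *\<^sub>R d)) \<le> exp (norm d)"
    using s norm_exp[of "s *\<^sub>R d"] by (simp add: mult_left_le_one_le order_trans)
  moreover have "0 \<le> C"
    using exp_x[of 0] by simp
  ultimately show ?thesis
    using exp_x[of "s * r"] by (auto intro!: order_trans[OF norm_mult_ineq] mult_mono)
qed

lemma norm_interaction_sub_le:
  fixes U V E M N S :: "'a::{real_normed_algebra_1,banach}"
  assumes UV: "U * V = 1" and exp_N: "exp N = V * E"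
    and U: "norm U \<le> C" and V: "norm V \<le> C"
  shows "norm (U * exp M - E)
    \<le> C * norm (exp M * S * exp (- N) - 1) * C * norm E + C * norm (exp M) * norm (S - 1)"
proof -
  define Psi where "Psi = exp M * S * exp (- N)"
  have "exp M * S = Psi * (V * E)"
    unfolding exp_N[symmetric] by (simp add: Psi_def mult.assoc exp_minus_mult_exp)
  moreover have "U * (V * E) = E"
    by (simp add: UV flip: mult.assoc)
  ultimately have eq: "U * exp M - E = U * (Psi - 1) * V * E - U * exp M * (S - 1)"
    by (simp add: algebra_simps)
  have "0 \<le> C"
    using U norm_ge_zero order_trans by blast
  then have "norm (U * (Psi - 1) * V * E) \<le> C * norm (Psi - 1) * C * norm E"
    and "norm (U * exp M * (S - 1)) \<le> C * norm (exp M) * norm (S - 1)"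
    using U V by (auto intro!: order_trans[OF norm_mult_ineq] mult_mono)
  then show ?thesis
    unfolding eq Psi_def[symmetric] by (intro order_trans[OF norm_triangle_ineq4 add_mono])
qed

lemma norm_exp_interaction_sub_le:
  fixes x d M b :: "'a::{real_normed_algebra_1,banach}" and C r :: real
  defines "C1 \<equiv> C * exp (norm d)" and "N \<equiv> r *\<^sub>R x + d" and "S \<equiv> 1 + b"
  assumes xd: "x * d = d * x"
    and exp_x: "\<And>t. norm (exp (t *\<^sub>R x)) \<le> C"
    and small: "norm (M * S - S * N) * C1 * C1 + norm b \<le> 1 / 2"
    and K: "2 * norm S * C1 \<le> K"
  shows "norm (exp (- (r *\<^sub>R x)) * exp M - exp d)
    \<le> C * (K * norm (M * S - S * N) * C1 + norm b) * C * exp (norm d) + C * K * norm b"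
proof -
  have C: "0 \<le> C" using exp_x[of 0] by simp
  then have C1: "0 \<le> C1" by (simp add: C1_def)
  have exp_N: "norm (exp (s *\<^sub>R N)) \<le> C1" "norm (exp (- (s *\<^sub>R N))) \<le> C1"
    if "0 \<le> s" "s \<le> 1" for s
    using that norm_exp_scaleR_add_commuting_le[OF xd exp_x, of s r]
      norm_exp_scaleR_add_commuting_le[OF xd exp_x, of "- s" r]
    by (simp_all add: N_def C1_def)
  have exp_M: "norm (exp (s *\<^sub>R M)) \<le> K" if "0 \<le> s" "s \<le> 1" for s
  proof -
    have "norm (exp (s *\<^sub>R M)) \<le> 2 * norm S * C1"
      using that exp_N small unfolding S_def by (intro norm_exp_le_of_almost_similar) auto
    with K show ?thesis
      by linarith
  qed
  have "norm (exp M * S * exp (- N) - S) \<le> K * norm (M * S - S * N) * C1"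
    using norm_exp_conj_sub_le[of 1 M K N C1 S] exp_M exp_N by simp
  moreover have Psi_1: "exp M * S * exp (- N) - 1 = (exp M * S * exp (- N) - S) + b"
    by (simp add: S_def)
  ultimately have Psi: "norm (exp M * S * exp (- N) - 1) \<le> K * norm (M * S - S * N) * C1 + norm b"
    unfolding Psi_1 using norm_triangle_ineq[of "exp M * S * exp (- N) - S" b] by linarith
  have "exp N = exp (r *\<^sub>R x) * exp d"
    by (simp add: N_def exp_add_commuting xd mult_scaleR_left mult_scaleR_right)
  then have "norm (exp (- (r *\<^sub>R x)) * exp M - exp d)
      \<le> C * norm (exp M * S * exp (- N) - 1) * C * norm (exp d) + C * norm (exp M) * norm (S - 1)"
    using exp_x[of "- r"] exp_x[of r]
    by (intro norm_interaction_sub_le[where V = "exp (r *\<^sub>R x)"]) (simp_all add: exp_minus_mult_exp)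
  also have "\<dots> \<le> C * (K * norm (M * S - S * N) * C1 + norm b) * C * exp (norm d) + C * K * norm b"
    using Psi norm_exp[of d] exp_M[of 1] C C1 order_trans[OF norm_ge_zero exp_M[of 1]]
    by (intro add_mono mult_mono) (auto simp: S_def)
  finally show ?thesis .
qed

lemma exp_interaction_estimate:
  fixes x z d a :: "'a::{real_normed_algebra_1,banach}"
  assumes xd: "x * d = d * x"
    and exp_x: "\<And>t. norm (exp (t *\<^sub>R x)) \<le> C"
    and rel: "x * a - a * x = d - z"
  shows "\<exists>B. \<forall>\<^sub>F \<kappa> in at_top. norm (exp (- (\<kappa> *\<^sub>R x)) * exp (\<kappa> *\<^sub>R x + z) - exp d) \<le> B / \<kappa>"
proof -
  define C1 where "C1 = C * exp (norm d)"
  define w where "w = z * a - a * d"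
  define K where "K = 2 * (1 + norm a) * C1"
  define B where "B = C * (K * norm w * C1 + norm a) * C1 + C * K * norm a"
  have "norm (exp (- (\<kappa> *\<^sub>R x)) * exp (\<kappa> *\<^sub>R x + z) - exp d) \<le> B / \<kappa>"
    if \<kappa>: "1 \<le> \<kappa>" "2 * (norm w * C1 * C1 + norm a) \<le> \<kappa>" for \<kappa>
  proof -
    define b where "b = (1 / \<kappa>) *\<^sub>R a"
    define v where "v = (\<kappa> *\<^sub>R x + z) * (1 + b) - (1 + b) * (\<kappa> *\<^sub>R x + d)"
    have norm_b: "norm b = norm a / \<kappa>"
      using \<kappa> by (simp add: b_def)
    have "v = (z - d) + \<kappa> *\<^sub>R (x * b - b * x) + (z * b - b * d)"
      by (simp add: v_def algebra_simps)
    also have "\<kappa> *\<^sub>R (x * b - b * x) = x * a - a * x"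
      using \<kappa> by (simp add: b_def scaleR_right_diff_distrib)
    also have "z * b - b * d = (1 / \<kappa>) *\<^sub>R w"
      by (simp add: b_def w_def scaleR_right_diff_distrib)
    finally have norm_v: "norm v = norm w / \<kappa>"
      using \<kappa> by (simp add: rel)
    have "norm b \<le> norm a"
      using \<kappa> by (simp add: norm_b divide_le_eq mult_le_cancel_left1)
    then have "norm (1 + b) \<le> 1 + norm a"
      using norm_triangle_ineq[of 1 b] by simp
    then have "2 * norm (1 + b) * C1 \<le> K"
      using exp_x[of 0] by (simp add: K_def C1_def mult_right_mono)
    moreover have "norm v * C1 * C1 + norm b \<le> 1 / 2"
      using \<kappa> by (simp add: norm_v norm_b field_simps)
    ultimately have "norm (exp (- (\<kappa> *\<^sub>R x)) * exp (\<kappa> *\<^sub>R x + z) - exp d)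
        \<le> C * (K * norm v * C1 + norm b) * C * exp (norm d) + C * K * norm b"
      unfolding v_def C1_def by (intro norm_exp_interaction_sub_le xd exp_x)
    also have "\<dots> = B / \<kappa>"
      using \<kappa> by (simp add: norm_v norm_b B_def C1_def field_simps)
    finally show ?thesis .
  qed
  then show ?thesis
    by (intro exI[of _ B] eventually_at_top_linorderI[of "max 1 (2 * (norm w * C1 * C1 + norm a))"]) simp
qed

lemma exp_interaction_tendsto:
  fixes x z d a :: "'a::{real_normed_algebra_1,banach}"
  assumes "x * d = d * x"
    and "\<And>t. norm (exp (t *\<^sub>R x)) \<le> C"
    and "x * a - a * x = d - z"
  shows "((\<lambda>\<kappa>. exp (- (\<kappa> *\<^sub>R x)) * exp (\<kappa> *\<^sub>R x + z)) \<longlongrightarrow> exp d) at_top"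
proof -
  obtain B where "\<forall>\<^sub>F \<kappa> in at_top. norm (exp (- (\<kappa> *\<^sub>R x)) * exp (\<kappa> *\<^sub>R x + z) - exp d) \<le> B / \<kappa>"
    using exp_interaction_estimate[OF assms] by blast
  then have "((\<lambda>\<kappa>. exp (- (\<kappa> *\<^sub>R x)) * exp (\<kappa> *\<^sub>R x + z) - exp d) \<longlongrightarrow> 0) at_top"
    by (rule Lim_null_comparison)
      (intro tendsto_divide_0[OF tendsto_const] filterlim_at_top_imp_at_infinity filterlim_ident)
  then show ?thesis
    by (rule LIM_zero_cancel)
qed

lemma exp_scaleR_skew_combination:
  fixes j :: "'a::{real_normed_algebra_1,banach}" and p :: "nat \<Rightarrow> 'a" and lam :: "nat \<Rightarrow> real"
  assumes p_orth: "\<And>l l'. l < m \<Longrightarrow> l' < m \<Longrightarrow> p l * p l' = (if l = l' then p l else 0)"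
    and j_p: "\<And>l. l < m \<Longrightarrow> j * p l = p l * j"
    and j_sq: "\<And>l. l < m \<Longrightarrow> j * j * p l = - p l"
  shows "exp (t *\<^sub>R (\<Sum>l<m. lam l *\<^sub>R (j * p l)))
    = 1 + (\<Sum>l<m. (cos (t * lam l) - 1) *\<^sub>R p l + sin (t * lam l) *\<^sub>R (j * p l))"
proof -
  define x where "x = (\<Sum>l<m. lam l *\<^sub>R (j * p l))"
  define F where "F t = 1 + (\<Sum>l<m. (cos (t * lam l) - 1) *\<^sub>R p l + sin (t * lam l) *\<^sub>R (j * p l))" for t
  have x_p: "x * p l = lam l *\<^sub>R (j * p l)" if "l < m" for l
  proof -
    have "x * p l = (\<Sum>l'<m. if l' = l then lam l *\<^sub>R (j * p l) else 0)"
      unfolding x_def sum_distrib_right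
      by (intro sum.cong) (auto simp: mult.assoc p_orth that)
    then show ?thesis using that by simp
  qed
  have x_jp: "x * (j * p l) = - (lam l *\<^sub>R p l)" if "l < m" for l
  proof -
    have "x * (j * p l) = (x * p l) * j"
      by (simp add: j_p that mult.assoc)
    also have "\<dots> = lam l *\<^sub>R (j * j * p l)"
      by (simp add: x_p that mult.assoc flip: j_p)
    finally show ?thesis by (simp add: j_sq that)
  qed
  have "(F has_vector_derivative x * F t) (at t)" for t
  proof -
    have "x * F t = x + (\<Sum>l<m. (cos (t * lam l) - 1) *\<^sub>R (x * p l) + sin (t * lam l) *\<^sub>R (x * (j * p l)))"
      by (simp add: F_def distrib_left sum_distrib_left)
    also have "\<dots> = x + (\<Sum>l<m. ((cos (t * lam l) - 1) * lam l) *\<^sub>R (j * p l) - (sin (t * lam l) * lam l) *\<^sub>R p l)"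
      by (intro arg_cong[where f = "(+) x"] sum.cong) (simp_all add: x_p x_jp)
    also have "\<dots> = (\<Sum>l<m. (- lam l * sin (t * lam l)) *\<^sub>R p l + (lam l * cos (t * lam l)) *\<^sub>R (j * p l))"
      unfolding x_def sum.distrib[symmetric] by (intro sum.cong refl) (simp add: algebra_simps)
    finally have x_F: "x * F t
        = (\<Sum>l<m. (- lam l * sin (t * lam l)) *\<^sub>R p l + (lam l * cos (t * lam l)) *\<^sub>R (j * p l))" .
    have cos: "((\<lambda>t. cos (t * lam l) - 1) has_real_derivative - lam l * sin (t * lam l)) (at t)" for l
      by (auto intro!: derivative_eq_intros)
    have sin: "((\<lambda>t. sin (t * lam l)) has_real_derivative lam l * cos (t * lam l)) (at t)" for l
      by (auto intro!: derivative_eq_intros)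
    have "((\<lambda>t. (cos (t * lam l) - 1) *\<^sub>R p l + sin (t * lam l) *\<^sub>R (j * p l)) has_vector_derivative
        (- lam l * sin (t * lam l)) *\<^sub>R p l + (lam l * cos (t * lam l)) *\<^sub>R (j * p l)) (at t)" for l
      by (rule has_vector_derivative_eq_rhs[OF has_vector_derivative_add[OF
            has_vector_derivative_scaleR[OF cos has_vector_derivative_const]
            has_vector_derivative_scaleR[OF sin has_vector_derivative_const]]]) simp
    then show ?thesis
      unfolding x_F unfolding F_def
      by (rule has_vector_derivative_eq_rhs[OF has_vector_derivative_add[OF
            has_vector_derivative_const has_vector_derivative_sum]]) simp_all
  qed
  moreover have "F 0 = 1"
    by (simp add: F_def)
  ultimately have "F t = exp (t *\<^sub>R x)"
    by (rule exp_scaleR_unique)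
  then show ?thesis
    by (simp add: x_def F_def)
qed

lemma norm_exp_scaleR_skew_combination_le:
  fixes j :: "'a::{real_normed_algebra_1,banach}" and p :: "nat \<Rightarrow> 'a" and lam :: "nat \<Rightarrow> real"
  assumes p_orth: "\<And>l l'. l < m \<Longrightarrow> l' < m \<Longrightarrow> p l * p l' = (if l = l' then p l else 0)"
    and j_p: "\<And>l. l < m \<Longrightarrow> j * p l = p l * j"
    and j_sq: "\<And>l. l < m \<Longrightarrow> j * j * p l = - p l"
  shows "norm (exp (t *\<^sub>R (j * (\<Sum>l<m. lam l *\<^sub>R p l)))) \<le> 1 + (\<Sum>l<m. 2 * norm (p l) + norm (j * p l))"
proof -
  have term_le: "norm ((cos (t * lam l) - 1) *\<^sub>R p l + sin (t * lam l) *\<^sub>R (j * p l))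
      \<le> 2 * norm (p l) + norm (j * p l)" for l
  proof -
    have "\<bar>cos (t * lam l) - 1\<bar> \<le> 2"
      using cos_le_one[of "t * lam l"] cos_ge_minus_one[of "t * lam l"] by (simp add: abs_le_iff)
    then have "\<bar>cos (t * lam l) - 1\<bar> * norm (p l) + \<bar>sin (t * lam l)\<bar> * norm (j * p l)
        \<le> 2 * norm (p l) + 1 * norm (j * p l)"
      by (intro add_mono mult_right_mono) simp_all
    then show ?thesis
      using norm_triangle_ineq[of "(cos (t * lam l) - 1) *\<^sub>R p l" "sin (t * lam l) *\<^sub>R (j * p l)"]
      by simp
  qed
  have "j * (\<Sum>l<m. lam l *\<^sub>R p l) = (\<Sum>l<m. lam l *\<^sub>R (j * p l))"
    by (simp add: sum_distrib_left)
  then have "norm (exp (t *\<^sub>R (j * (\<Sum>l<m. lam l *\<^sub>R p l))))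
      \<le> 1 + (\<Sum>l<m. norm ((cos (t * lam l) - 1) *\<^sub>R p l + sin (t * lam l) *\<^sub>R (j * p l)))"
    by (simp add: exp_scaleR_skew_combination[OF p_orth j_p j_sq] order_trans[OF norm_triangle_ineq] norm_sum)
  moreover have "(\<Sum>l<m. norm ((cos (t * lam l) - 1) *\<^sub>R p l + sin (t * lam l) *\<^sub>R (j * p l)))
      \<le> (\<Sum>l<m. 2 * norm (p l) + norm (j * p l))"
    by (rule sum_mono) (rule term_le)
  ultimately show ?thesis
    by linarith
qed

lemma commute_sum:
  fixes c :: "'a::semiring_0"
  shows "(\<And>i. i \<in> I \<Longrightarrow> c * f i = f i * c) \<Longrightarrow> c * sum f I = sum f I * c"
  by (simp add: sum_distrib_left sum_distrib_right)

lemma spectral_mult_sandwich: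
  fixes y :: "'a::real_algebra_1" and p :: "nat \<Rightarrow> 'a" and lam :: "nat \<Rightarrow> real"
  assumes p_orth: "\<And>l l'. l < m \<Longrightarrow> l' < m \<Longrightarrow> p l * p l' = (if l = l' then p l else 0)"
    and l: "l < m" "l' < m"
  shows "(\<Sum>k<m. lam k *\<^sub>R p k) * (p l * y * p l') = lam l *\<^sub>R (p l * y * p l')"
    and "(p l * y * p l') * (\<Sum>k<m. lam k *\<^sub>R p k) = lam l' *\<^sub>R (p l * y * p l')"
proof -
  have "(\<Sum>k<m. lam k *\<^sub>R p k) * p l = (\<Sum>k<m. if k = l then lam l *\<^sub>R p l else 0)"
    unfolding sum_distrib_right by (intro sum.cong) (auto simp: p_orth l)
  then show "(\<Sum>k<m. lam k *\<^sub>R p k) * (p l * y * p l') = lam l *\<^sub>R (p l * y * p l')"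
    using l by (simp flip: mult.assoc)
  have "p l' * (\<Sum>k<m. lam k *\<^sub>R p k) = (\<Sum>k<m. if k = l' then lam l' *\<^sub>R p l' else 0)"
    unfolding sum_distrib_left by (intro sum.cong) (auto simp: p_orth l)
  then show "(p l * y * p l') * (\<Sum>k<m. lam k *\<^sub>R p k) = lam l' *\<^sub>R (p l * y * p l')"
    using l by (simp add: mult.assoc)
qed

lemma commutator_offdiagonal:
  fixes y :: "'a::real_algebra_1" and p :: "nat \<Rightarrow> 'a" and lam :: "nat \<Rightarrow> real"
  assumes p_orth: "\<And>l l'. l < m \<Longrightarrow> l' < m \<Longrightarrow> p l * p l' = (if l = l' then p l else 0)"
    and lam_inj: "inj_on lam {..<m}"
  defines "x \<equiv> \<Sum>l<m. lam l *\<^sub>R p l"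
    and "a \<equiv> \<Sum>l<m. \<Sum>l'<m. if l = l' then 0 else (1 / (lam l' - lam l)) *\<^sub>R (p l * y * p l')"
  shows "x * a - a * x = (\<Sum>l<m. p l * y * p l) - (\<Sum>l<m. \<Sum>l'<m. p l * y * p l')"
proof -
  have "c *\<^sub>R (lam l *\<^sub>R q) - c *\<^sub>R (lam l' *\<^sub>R q) = - q"
    if "l \<in> {..<m}" "l' \<in> {..<m}" "l \<noteq> l'" and c: "c = 1 / (lam l' - lam l)" for l l' c and q :: 'a
  proof -
    have "lam l' - lam l \<noteq> 0"
      using that lam_inj by (auto dest: inj_onD)
    then have "c * lam l - c * lam l' = -1"
      by (simp add: c divide_simps)
    then show ?thesis
      by (metis scaleR_scaleR scaleR_left_diff_distrib scaleR_minus1_left)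
  qed
  moreover have "x * (p l * y * p l') = lam l *\<^sub>R (p l * y * p l')"
    and "(p l * y * p l') * x = lam l' *\<^sub>R (p l * y * p l')" if "l < m" "l' < m" for l l'
    unfolding x_def using spectral_mult_sandwich[OF p_orth that] by blast+
  ultimately have "x * a - a * x = (\<Sum>l<m. \<Sum>l'<m. if l = l' then 0 else - (p l * y * p l'))"
    unfolding a_def sum_distrib_left sum_distrib_right sum_subtractf[symmetric]
    by (intro sum.cong refl) simp
  also have "\<dots> = (\<Sum>l<m. \<Sum>l'<m. (if l = l' then p l * y * p l' else 0) - p l * y * p l')"
    by (intro sum.cong) auto
  finally show ?thesis
    by (simp add: sum_subtractf)
qed

lemma commutator_eq_pinching:
  fixes j y :: "'a::real_algebra_1" and p :: "nat \<Rightarrow> 'a" and lam :: "nat \<Rightarrow> real"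
  assumes p_orth: "\<And>l l'. l < m \<Longrightarrow> l' < m \<Longrightarrow> p l * p l' = (if l = l' then p l else 0)"
    and lam_inj: "inj_on lam {..<m}"
    and y: "(\<Sum>l<m. p l) * y * (\<Sum>l<m. p l) = y"
    and j_p: "\<And>l. l < m \<Longrightarrow> j * p l = p l * j"
    and j_y: "j * y = y * j"
  defines "x \<equiv> j * (\<Sum>l<m. lam l *\<^sub>R p l)"
    and "d \<equiv> j * (\<Sum>l<m. p l * y * p l)"
  shows "x * d = d * x"
    and "\<exists>a. x * a - a * x = d - j * y"
proof -
  define x0 where "x0 = (\<Sum>l<m. lam l *\<^sub>R p l)"
  define d0 where "d0 = (\<Sum>l<m. p l * y * p l)"
  have j_sandwich: "j * (p l * y * p l') = (p l * y * p l') * j" if "l < m" "l' < m" for l l'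
    by (metis j_p j_y mult.assoc that)
  have j_x0: "j * x0 = x0 * j"
    unfolding x0_def by (rule commute_sum) (simp add: j_p)
  have "x0 * d0 = d0 * x0"
    unfolding x0_def d0_def by (rule commute_sum) (simp add: spectral_mult_sandwich[OF p_orth])
  moreover have "j * d0 = d0 * j"
    unfolding d0_def by (rule commute_sum) (simp add: j_sandwich)
  ultimately show "x * d = d * x"
    unfolding x_def d_def x0_def[symmetric] d0_def[symmetric] by (metis mult.assoc j_x0)
  define a where "a = (\<Sum>l<m. \<Sum>l'<m. if l = l' then 0 else (1 / (lam l' - lam l)) *\<^sub>R (p l * y * p l'))"
  have "(\<Sum>l<m. \<Sum>l'<m. p l * y * p l') = (\<Sum>l<m. p l) * y * (\<Sum>l'<m. p l')"
    by (simp add: sum_distrib_left sum_distrib_right) (rule sum.swap)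
  then have "(\<Sum>l<m. \<Sum>l'<m. p l * y * p l') = y"
    using y by simp
  then have "x0 * a - a * x0 = d0 - y"
    using commutator_offdiagonal[OF p_orth lam_inj, of y] by (simp add: x0_def d0_def a_def)
  moreover have "j * a = a * j"
    unfolding a_def by (intro commute_sum) (simp add: j_sandwich)
  ultimately have "x * a - a * x = d - j * y"
    unfolding x_def d_def x0_def[symmetric] d0_def[symmetric] by (metis mult.assoc right_diff_distrib j_x0)
  then show "\<exists>a. x * a - a * x = d - j * y" ..
qed

lemma exp_interaction_tendsto_pinching:
  fixes j y :: "'a::{real_normed_algebra_1,banach}" and p :: "nat \<Rightarrow> 'a" and lam :: "nat \<Rightarrow> real"
  assumes p_orth: "\<And>l l'. l < m \<Longrightarrow> l' < m \<Longrightarrow> p l * p l' = (if l = l' then p l else 0)"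
    and lam_inj: "inj_on lam {..<m}"
    and y: "(\<Sum>l<m. p l) * y * (\<Sum>l<m. p l) = y"
    and j_p: "\<And>l. l < m \<Longrightarrow> j * p l = p l * j"
    and j_y: "j * y = y * j"
    and j_sq: "\<And>l. l < m \<Longrightarrow> j * j * p l = - p l"
  defines "x \<equiv> j * (\<Sum>l<m. lam l *\<^sub>R p l)"
  shows "((\<lambda>\<kappa>. exp (- (\<kappa> *\<^sub>R x)) * exp (\<kappa> *\<^sub>R x + j * y))
           \<longlongrightarrow> exp (j * (\<Sum>l<m. p l * y * p l))) at_top"
proof -
  obtain a where "x * a - a * x = j * (\<Sum>l<m. p l * y * p l) - j * y"
    using commutator_eq_pinching(2)[OF p_orth lam_inj y j_p j_y] unfolding x_def by blast
  with commutator_eq_pinching(1)[OF p_orth lam_inj y j_p j_y]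
    norm_exp_scaleR_skew_combination_le[OF p_orth j_p j_sq]
  show ?thesis
    unfolding x_def by (intro exp_interaction_tendsto)
qed

section \<open>Bounded operators on bounded sequences\<close>

(* The discrete metric, inducing the existing topology of nat; bounded functions on a metric
   space form a Banach space. *)
instantiation nat :: metric_space
begin

definition dist_nat :: "nat \<Rightarrow> nat \<Rightarrow> real"
  where "dist_nat m n = (if m = n then 0 else 1)"

definition uniformity_nat :: "(nat \<times> nat) filter"
  where "uniformity_nat = (INF e\<in>{0<..}. principal {(m, n). dist m n < e})"

instance
proof
  fix m n k :: nat and U :: "nat set"
  show "(uniformity :: (nat \<times> nat) filter) = (INF e\<in>{0<..}. principal {(m, n). dist m n < e})"
    by (simp add: uniformity_nat_def)
  show "(dist m n = 0) = (m = n)" and "dist m n \<le> dist m k + dist n k"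
    by (simp_all add: dist_nat_def)
  have "\<forall>\<^sub>F (m', n) in uniformity. m' = m \<longrightarrow> n \<in> U" if "m \<in> U" for m
  proof (rule filter_leD)
    show "(uniformity :: (nat \<times> nat) filter) \<le> principal {(m, n). dist m n < 1}"
      unfolding uniformity_nat_def by (rule INF_lower) simp
    show "\<forall>\<^sub>F (m', n) in principal {(m, n). dist m n < 1}. m' = m \<longrightarrow> n \<in> U"
      using that by (auto simp: eventually_principal dist_nat_def)
  qed
  then show "open U = (\<forall>m\<in>U. \<forall>\<^sub>F (m', n) in uniformity. m' = m \<longrightarrow> n \<in> U)"
    by (simp add: open_discrete)
qed

end

instance bcontfun :: (metric_space, banach) banach ..

type_synonym linfty = "nat \<Rightarrow>\<^sub>C complex"

definition unit_seq :: "nat \<Rightarrow> linfty"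
  where "unit_seq j = Bcontfun (\<lambda>l. if l = j then 1 else 0)"

lemma apply_unit_seq: "apply_bcontfun (unit_seq j) l = (if l = j then 1 else 0)"
proof -
  have "(\<lambda>l::nat. if l = j then 1 else 0 :: complex) \<in> bcontfun"
    by (rule bcontfun_normI[where b = 1]) auto
  then show ?thesis
    by (simp add: unit_seq_def Bcontfun_inverse)
qed

lemma norm_unit_seq: "norm (unit_seq j) = 1"
proof (rule antisym)
  show "norm (unit_seq j) \<le> 1"
    by (rule norm_bound) (simp add: apply_unit_seq)
  show "1 \<le> norm (unit_seq j)"
    using norm_bounded[of "unit_seq j" j] by (simp add: apply_unit_seq)
qed

lemma unit_seq_neq_0: "unit_seq j \<noteq> 0"
  using norm_unit_seq[of j] by auto

(* A copy of linfty \<Rightarrow>\<^sub>L linfty, because type classes cannot be instantiated for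
   ('a, 'a) blinfun. *)
typedef bop = "UNIV :: (linfty \<Rightarrow>\<^sub>L linfty) set"
  morphisms blinfun_of_bop Bop
  by simp

setup_lifting type_definition_bop

instantiation bop :: real_normed_vector
begin

lift_definition norm_bop :: "bop \<Rightarrow> real" is norm .
lift_definition plus_bop :: "bop \<Rightarrow> bop \<Rightarrow> bop" is "(+)" .
lift_definition minus_bop :: "bop \<Rightarrow> bop \<Rightarrow> bop" is "(-)" .
lift_definition uminus_bop :: "bop \<Rightarrow> bop" is uminus .
lift_definition zero_bop :: bop is 0 .
lift_definition scaleR_bop :: "real \<Rightarrow> bop \<Rightarrow> bop" is scaleR .

definition dist_bop :: "bop \<Rightarrow> bop \<Rightarrow> real"
  where "dist_bop S T = norm (S - T)"

definition uniformity_bop :: "(bop \<times> bop) filter"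
  where "uniformity_bop = (INF e\<in>{0<..}. principal {(S, T). dist S T < e})"

definition open_bop :: "bop set \<Rightarrow> bool"
  where "open_bop U = (\<forall>S\<in>U. \<forall>\<^sub>F (S', T) in uniformity. S' = S \<longrightarrow> T \<in> U)"

definition sgn_bop :: "bop \<Rightarrow> bop"
  where "sgn_bop S = inverse (norm S) *\<^sub>R S"

instance
  by standard (unfold dist_bop_def open_bop_def sgn_bop_def uniformity_bop_def,
      (rule refl | transfer, force simp: algebra_simps norm_triangle_ineq)+)

end

instantiation bop :: ring_1
begin

lift_definition times_bop :: "bop \<Rightarrow> bop \<Rightarrow> bop" is "(o\<^sub>L)" .
lift_definition one_bop :: bop is id_blinfun .

instance
proof
  fix S T U :: bop
  show "S * T * U = S * (T * U)" by transfer (auto intro!: blinfun_eqI)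
  show "1 * S = S" by transfer (auto intro!: blinfun_eqI)
  show "S * 1 = S" by transfer (auto intro!: blinfun_eqI)
  show "(S + T) * U = S * U + T * U"
    by transfer (auto intro!: blinfun_eqI simp: blinfun.bilinear_simps)
  show "S * (T + U) = S * T + S * U"
    by transfer (auto intro!: blinfun_eqI simp: blinfun.bilinear_simps)
  show "(0::bop) \<noteq> 1"
  proof transfer
    show "0 \<noteq> (id_blinfun :: linfty \<Rightarrow>\<^sub>L linfty)"
      using unit_seq_neq_0[of 0] by (auto dest: arg_cong[where f = "\<lambda>f. blinfun_apply f (unit_seq 0)"])
  qed
qed

end

instance bop :: real_normed_algebra_1
proof
  fix r :: real and S T :: bop
  show "r *\<^sub>R S * T = r *\<^sub>R (S * T)" and "S * r *\<^sub>R T = r *\<^sub>R (S * T)"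
    by (transfer, auto intro!: blinfun_eqI simp: blinfun.bilinear_simps)+
  show "norm (S * T) \<le> norm S * norm T"
    by transfer (rule norm_blinfun_compose)
  show "norm (1 :: bop) = 1"
  proof transfer
    have "norm (unit_seq 0) \<le> norm (id_blinfun :: linfty \<Rightarrow>\<^sub>L linfty) * norm (unit_seq 0)"
      using norm_blinfun[of id_blinfun "unit_seq 0"] by simp
    then show "norm (id_blinfun :: linfty \<Rightarrow>\<^sub>L linfty) = 1"
      using norm_blinfun_id_le[where 'a = linfty] by (simp add: norm_unit_seq)
  qed
qed

lemma dist_bop: "dist S T = dist (blinfun_of_bop S) (blinfun_of_bop T)"
  by (simp add: dist_norm norm_bop.rep_eq minus_bop.rep_eq)

instance bop :: banach
proof
  fix X :: "nat \<Rightarrow> bop"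
  assume "Cauchy X"
  then have "Cauchy (\<lambda>n. blinfun_of_bop (X n))"
    unfolding Cauchy_def dist_bop .
  then obtain L where "(\<lambda>n. blinfun_of_bop (X n)) \<longlonglongrightarrow> L"
    using Cauchy_convergent convergent_def by blast
  then have "X \<longlonglongrightarrow> Bop L"
    unfolding tendsto_iff dist_bop by (simp add: Bop_inverse)
  then show "convergent X"
    unfolding convergent_def by blast
qed

definition bop_apply :: "bop \<Rightarrow> linfty \<Rightarrow> nat \<Rightarrow> complex"
  where "bop_apply T v i = apply_bcontfun (blinfun_apply (blinfun_of_bop T) v) i"

lemma bop_eqI: "(\<And>v i. bop_apply S v i = bop_apply T v i) \<Longrightarrow> S = T"
  unfolding bop_apply_def by (metis blinfun_of_bop_inject blinfun_eqI bcontfun_eqI)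

lemma bop_apply_add: "bop_apply (S + T) v i = bop_apply S v i + bop_apply T v i"
  by (simp add: bop_apply_def plus_bop.rep_eq plus_blinfun.rep_eq)

lemma bop_apply_scaleR: "bop_apply (r *\<^sub>R T) v i = of_real r * bop_apply T v i"
  unfolding bop_apply_def scaleR_bop.rep_eq scaleR_blinfun.rep_eq scaleR_bcontfun.rep_eq
  by (simp add: scaleR_conv_of_real)

lemma bop_apply_zero: "bop_apply 0 v i = 0"
  by (simp add: bop_apply_def zero_bop.rep_eq)

lemma bop_apply_one: "bop_apply 1 v i = apply_bcontfun v i"
  by (simp add: bop_apply_def one_bop.rep_eq)

lemma bop_apply_mult: "bop_apply (S * T) v i = bop_apply S (blinfun_apply (blinfun_of_bop T) v) i"
  by (simp add: bop_apply_def times_bop.rep_eq)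

definition bop_entry :: "nat \<Rightarrow> nat \<Rightarrow> bop \<Rightarrow> complex"
  where "bop_entry i j T = bop_apply T (unit_seq j) i"

lemma bop_entry_add: "bop_entry i j (S + T) = bop_entry i j S + bop_entry i j T"
  by (simp add: bop_entry_def bop_apply_add)

lemma bop_entry_zero: "bop_entry i j 0 = 0"
  by (simp add: bop_entry_def bop_apply_zero)

lemma bop_entry_one: "bop_entry i j 1 = (if i = j then 1 else 0)"
  by (simp add: bop_entry_def bop_apply_one apply_unit_seq)

lemma bounded_linear_bop_entry: "bounded_linear (bop_entry i j)"
proof (rule bounded_linear_intro[where K = 1])
  fix S T :: bop and r :: real
  show "bop_entry i j (S + T) = bop_entry i j S + bop_entry i j T"
    by (rule bop_entry_add)
  show "bop_entry i j (r *\<^sub>R T) = r *\<^sub>R bop_entry i j T"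
    by (simp add: bop_entry_def bop_apply_scaleR) (simp add: scaleR_conv_of_real)
  have "norm (bop_entry i j T) \<le> norm (blinfun_apply (blinfun_of_bop T) (unit_seq j))"
    unfolding bop_entry_def bop_apply_def by (rule norm_bounded)
  also have "\<dots> \<le> norm T"
    using norm_blinfun[of "blinfun_of_bop T" "unit_seq j"] by (simp add: norm_unit_seq norm_bop.rep_eq)
  finally show "norm (bop_entry i j T) \<le> norm T * 1" by simp
qed

section \<open>Square matrices as operators\<close>

definition entries_map :: "nat \<Rightarrow> (nat \<Rightarrow> nat \<Rightarrow> complex) \<Rightarrow> linfty \<Rightarrow> linfty"
  where "entries_map N g v = Bcontfun (\<lambda>i. if i < N then \<Sum>l<N. g i l * apply_bcontfun v l else 0)"

lemma apply_entries_map: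
  "apply_bcontfun (entries_map N g v) i = (if i < N then \<Sum>l<N. g i l * apply_bcontfun v l else 0)"
proof -
  define f where "f i = (if i < N then \<Sum>l<N. g i l * apply_bcontfun v l else 0)" for i
  have "norm (f i) \<le> (\<Sum>i<N. norm (\<Sum>l<N. g i l * apply_bcontfun v l))" for i
    by (cases "i < N") (auto simp: f_def sum_nonneg intro: member_le_sum[where f = "\<lambda>i. norm (\<Sum>l<N. g i l * apply_bcontfun v l)"])
  then have "f \<in> bcontfun"
    by (intro bcontfun_normI) auto
  then show ?thesis
    by (simp add: entries_map_def f_def[symmetric] Bcontfun_inverse)
qed

lemma norm_entries_map: "norm (entries_map N g v) \<le> norm v * (\<Sum>i<N. \<Sum>l<N. norm (g i l))"
proof (rule norm_bound)
  fix i
  have "norm (\<Sum>l<N. g i l * apply_bcontfun v l) \<le> (\<Sum>l<N. norm (g i l) * norm v)"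
    by (intro order_trans[OF norm_sum] sum_mono) (simp add: norm_mult mult_left_mono norm_bounded)
  also have "\<dots> = norm v * (\<Sum>l<N. norm (g i l))"
    by (simp add: sum_distrib_left mult.commute)
  also have "\<dots> \<le> norm v * (\<Sum>i<N. \<Sum>l<N. norm (g i l))" if "i < N"
    using that by (intro mult_left_mono member_le_sum[where f = "\<lambda>i. \<Sum>l<N. norm (g i l)"])
      (auto intro: sum_nonneg)
  finally show "norm (apply_bcontfun (entries_map N g v) i) \<le> norm v * (\<Sum>i<N. \<Sum>l<N. norm (g i l))"
    by (auto simp: apply_entries_map sum_nonneg)
qed

lemma bounded_linear_entries_map: "bounded_linear (entries_map N g)"
proof (rule bounded_linear_intro)
  fix v w :: linfty and r :: real
  show "entries_map N g (v + w) = entries_map N g v + entries_map N g w"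
    by (rule bcontfun_eqI) (simp add: apply_entries_map sum.distrib distrib_left)
  show "entries_map N g (r *\<^sub>R v) = r *\<^sub>R entries_map N g v"
    by (rule bcontfun_eqI) (simp add: apply_entries_map scaleR_conv_of_real sum_distrib_left algebra_simps)
  show "norm (entries_map N g v) \<le> norm v * (\<Sum>i<N. \<Sum>l<N. norm (g i l))"
    by (rule norm_entries_map)
qed

lift_definition op_of_entries :: "nat \<Rightarrow> (nat \<Rightarrow> nat \<Rightarrow> complex) \<Rightarrow> bop"
  is "\<lambda>N g. Blinfun (entries_map N g)" .

lemma bop_apply_op_of_entries:
  "bop_apply (op_of_entries N g) v i = (if i < N then \<Sum>l<N. g i l * apply_bcontfun v l else 0)"
  by (simp add: bop_apply_def op_of_entries.rep_eq bounded_linear_Blinfun_apply[OF bounded_linear_entries_map]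
      apply_entries_map)

lemma op_of_entries_cong:
  "(\<And>i j. i < N \<Longrightarrow> j < N \<Longrightarrow> g i j = h i j) \<Longrightarrow> op_of_entries N g = op_of_entries N h"
  by (rule bop_eqI) (simp add: bop_apply_op_of_entries)

lemma op_of_entries_add: "op_of_entries N (\<lambda>i j. g i j + h i j) = op_of_entries N g + op_of_entries N h"
  by (rule bop_eqI) (simp add: bop_apply_add bop_apply_op_of_entries sum.distrib distrib_right)

lemma op_of_entries_scaleR: "op_of_entries N (\<lambda>i j. of_real r * g i j) = r *\<^sub>R op_of_entries N g"
  by (rule bop_eqI) (simp add: bop_apply_scaleR bop_apply_op_of_entries sum_distrib_left algebra_simps)

lemma op_of_entries_zero: "op_of_entries N (\<lambda>i j. 0) = 0"
  by (rule bop_eqI) (simp add: bop_apply_zero bop_apply_op_of_entries)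

lemma op_of_entries_uminus: "op_of_entries N (\<lambda>i j. - g i j) = - op_of_entries N g"
  using op_of_entries_scaleR[of N "-1" g] by simp

lemma op_of_entries_diff: "op_of_entries N (\<lambda>i j. g i j - h i j) = op_of_entries N g - op_of_entries N h"
  using op_of_entries_add[of N g "\<lambda>i j. - h i j"] by (simp add: op_of_entries_uminus)

lemma op_of_entries_sum: "op_of_entries N (\<lambda>i j. \<Sum>k\<in>K. g k i j) = (\<Sum>k\<in>K. op_of_entries N (g k))"
  by (induction K rule: infinite_finite_induct) (simp_all add: op_of_entries_zero op_of_entries_add)

lemma op_of_entries_mult:
  "op_of_entries N g * op_of_entries N h = op_of_entries N (\<lambda>i j. \<Sum>l<N. g i l * h l j)"
proof (rule bop_eqI)
  fix v i
  have "(\<Sum>l<N. g i l * (\<Sum>k<N. h l k * apply_bcontfun v k))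
      = (\<Sum>l<N. \<Sum>k<N. g i l * h l k * apply_bcontfun v k)"
    by (simp add: sum_distrib_left mult.assoc)
  also have "\<dots> = (\<Sum>k<N. (\<Sum>l<N. g i l * h l k) * apply_bcontfun v k)"
    by (subst sum.swap) (simp add: sum_distrib_right)
  finally show "bop_apply (op_of_entries N g * op_of_entries N h) v i
      = bop_apply (op_of_entries N (\<lambda>i j. \<Sum>l<N. g i l * h l j)) v i"
    by (simp add: bop_apply_mult bop_apply_op_of_entries bop_apply_op_of_entries[unfolded bop_apply_def])
qed

lemma norm_op_of_entries: "norm (op_of_entries N g) \<le> (\<Sum>i<N. \<Sum>l<N. norm (g i l))"
  unfolding norm_bop.rep_eq op_of_entries.rep_eq
  by (rule norm_blinfun_bound)
    (simp_all add: sum_nonneg bounded_linear_Blinfun_apply[OF bounded_linear_entries_map]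
      norm_entries_map mult.commute)

lemma op_of_entries_sums:
  assumes "\<And>i j. i < N \<Longrightarrow> j < N \<Longrightarrow> (\<lambda>k. g k i j) sums s i j"
  shows "(\<lambda>k. op_of_entries N (g k)) sums op_of_entries N s"
proof -
  have "((\<lambda>n. op_of_entries N (\<lambda>i j. (\<Sum>k<n. g k i j) - s i j)) \<longlonglongrightarrow> 0)"
  proof (rule Lim_null_comparison)
    show "\<forall>\<^sub>F n in sequentially. norm (op_of_entries N (\<lambda>i j. (\<Sum>k<n. g k i j) - s i j))
        \<le> (\<Sum>i<N. \<Sum>j<N. norm ((\<Sum>k<n. g k i j) - s i j))"
      by (simp add: norm_op_of_entries)
    show "(\<lambda>n. \<Sum>i<N. \<Sum>j<N. norm ((\<Sum>k<n. g k i j) - s i j)) \<longlonglongrightarrow> 0"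
      using assms by (intro tendsto_null_sum tendsto_norm_zero LIM_zero) (auto simp: sums_def)
  qed
  then show ?thesis
    by (simp add: sums_def op_of_entries_diff op_of_entries_sum LIM_zero_cancel)
qed

lemma bop_entry_op_of_entries: "i < N \<Longrightarrow> j < N \<Longrightarrow> bop_entry i j (op_of_entries N g) = g i j"
  by (simp add: bop_entry_def bop_apply_op_of_entries apply_unit_seq if_distrib[of "(*) _"] cong: if_cong)

definition op_of_mat :: "nat \<Rightarrow> complex mat \<Rightarrow> bop"
  where "op_of_mat N A = op_of_entries N (\<lambda>i j. A $$ (i, j))"

lemma op_of_mat_mult:
  "A \<in> carrier_mat N N \<Longrightarrow> B \<in> carrier_mat N N \<Longrightarrow> op_of_mat N (A * B) = op_of_mat N A * op_of_mat N B"
  unfolding op_of_mat_def op_of_entries_mult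
  by (rule op_of_entries_cong) (auto simp: scalar_prod_def lessThan_atLeast0 intro!: sum.cong)

lemma op_of_mat_smult:
  "A \<in> carrier_mat N N \<Longrightarrow> op_of_mat N (c \<cdot>\<^sub>m A) = op_of_entries N (\<lambda>i j. c * A $$ (i, j))"
  unfolding op_of_mat_def by (rule op_of_entries_cong) auto

lemma op_of_mat_msum: "op_of_mat N (msum N f I) = (\<Sum>k\<in>I. op_of_mat N (f k))"
  unfolding op_of_mat_def op_of_entries_sum[symmetric] msum_def
  by (rule op_of_entries_cong) auto

lemma op_of_mat_zero: "op_of_mat N (0\<^sub>m N N) = 0"
  unfolding op_of_mat_def op_of_entries_zero[symmetric, of N] by (rule op_of_entries_cong) auto

lemma op_of_mat_pow:
  assumes "A \<in> carrier_mat N N"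
  shows "op_of_mat N (A ^\<^sub>m Suc k) = op_of_mat N A ^ Suc k"
proof (induction k)
  case 0
  show ?case
    using assms by (simp add: left_mult_one_mat)
next
  case (Suc k)
  have "op_of_mat N (A ^\<^sub>m Suc (Suc k)) = op_of_mat N (A ^\<^sub>m Suc k) * op_of_mat N A"
    by (subst pow_mat.simps(2)) (rule op_of_mat_mult[OF pow_carrier_mat[OF assms] assms])
  with Suc.IH show ?case
    by (metis power_Suc2)
qed

lemma op_of_mat_smult_of_real:
  "A \<in> carrier_mat N N \<Longrightarrow> op_of_mat N (complex_of_real r \<cdot>\<^sub>m A) = r *\<^sub>R op_of_mat N A"
  by (simp add: op_of_mat_smult op_of_entries_scaleR) (simp add: op_of_mat_def)

lemma op_of_mat_msum_smult_of_real:
  assumes "\<And>j. j \<in> I \<Longrightarrow> P j \<in> carrier_mat N N"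
  shows "op_of_mat N (msum N (\<lambda>j. complex_of_real (c j) \<cdot>\<^sub>m P j) I) = (\<Sum>j\<in>I. c j *\<^sub>R op_of_mat N (P j))"
  unfolding op_of_mat_msum using assms by (intro sum.cong refl) (simp add: op_of_mat_smult_of_real)

lemma op_of_mat_msum_sandwich:
  assumes P: "\<And>j. j \<in> I \<Longrightarrow> P j \<in> carrier_mat N N" and Z: "Z \<in> carrier_mat N N"
  shows "op_of_mat N (msum N (\<lambda>j. P j * Z * P j) I)
    = (\<Sum>j\<in>I. op_of_mat N (P j) * op_of_mat N Z * op_of_mat N (P j))"
  unfolding op_of_mat_msum
proof (rule sum.cong[OF refl])
  fix j assume "j \<in> I"
  then have P_j: "P j \<in> carrier_mat N N" by (rule P)
  have "op_of_mat N (P j * Z * P j) = op_of_mat N (P j * Z) * op_of_mat N (P j)"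
    by (rule op_of_mat_mult[OF mult_carrier_mat[OF P_j Z] P_j])
  also have "op_of_mat N (P j * Z) = op_of_mat N (P j) * op_of_mat N Z"
    by (rule op_of_mat_mult[OF P_j Z])
  finally show "op_of_mat N (P j * Z * P j) = op_of_mat N (P j) * op_of_mat N Z * op_of_mat N (P j)" .
qed

definition compl_proj :: "nat \<Rightarrow> bop"
  where "compl_proj N = 1 - op_of_mat N (1\<^sub>m N)"

lemma one_mult_op_of_entries: "op_of_mat N (1\<^sub>m N) * op_of_entries N g = op_of_entries N g"
  unfolding op_of_mat_def op_of_entries_mult
  by (rule op_of_entries_cong) (simp add: if_distrib[of "\<lambda>x. x * _"] cong: if_cong)

lemma op_of_entries_mult_one: "op_of_entries N g * op_of_mat N (1\<^sub>m N) = op_of_entries N g"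
  unfolding op_of_mat_def op_of_entries_mult
  by (rule op_of_entries_cong) (simp add: if_distrib[of "(*) _"] cong: if_cong)

lemma compl_proj_mult: "compl_proj N * op_of_entries N g = 0"
  by (simp add: compl_proj_def left_diff_distrib one_mult_op_of_entries)

lemma mult_compl_proj: "op_of_entries N g * compl_proj N = 0"
  by (simp add: compl_proj_def right_diff_distrib op_of_entries_mult_one)

lemma compl_proj_idem: "compl_proj N * compl_proj N = compl_proj N"
  using compl_proj_mult[of N] by (simp add: compl_proj_def op_of_mat_def right_diff_distrib)

lemma bop_entry_compl_proj:
  assumes "i < N" "j < N"
  shows "bop_entry i j (compl_proj N) = 0"
proof -
  have "bop_entry i j (compl_proj N) + bop_entry i j (op_of_mat N (1\<^sub>m N)) = bop_entry i j 1"
    by (simp add: compl_proj_def flip: bop_entry_add)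
  then show ?thesis
    using assms by (simp add: bop_entry_one op_of_mat_def bop_entry_op_of_entries)
qed

lemma exp_op_of_mat:
  assumes A: "A \<in> carrier_mat N N"
  shows "exp (op_of_mat N A) = compl_proj N + op_of_mat N (mexp A)"
proof -
  define g where "g k i j = (A ^\<^sub>m k) $$ (i, j) / of_nat (fact k)" for k i j
  have power_term: "op_of_mat N A ^ k /\<^sub>R fact k = (if k = 0 then compl_proj N else 0) + op_of_entries N (g k)" for k
  proof (cases k)
    case 0
    have "op_of_entries N (g 0) = op_of_mat N (1\<^sub>m N)"
      unfolding op_of_mat_def using A by (intro op_of_entries_cong) (simp add: g_def)
    then show ?thesis
      using 0 by (simp add: compl_proj_def)
  next
    case (Suc k')
    have "op_of_mat N A ^ k /\<^sub>R fact k = op_of_entries N (\<lambda>i j. of_real (inverse (fact k)) * (A ^\<^sub>m k) $$ (i, j))"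
      unfolding op_of_entries_scaleR Suc op_of_mat_pow[OF A, symmetric] by (simp add: op_of_mat_def)
    also have "\<dots> = op_of_entries N (g k)"
      by (intro op_of_entries_cong) (simp add: g_def field_simps)
    finally show ?thesis
      using Suc by simp
  qed
  have "(\<lambda>k. g k i j) sums mexp A $$ (i, j)" if "i < N" "j < N" for i j
  proof -
    have "summable (\<lambda>k. bop_entry i j (op_of_mat N A ^ k /\<^sub>R fact k))"
      by (rule bounded_linear.summable[OF bounded_linear_bop_entry summable_exp_generic])
    moreover have "bop_entry i j (op_of_mat N A ^ k /\<^sub>R fact k) = g k i j" for k
      using that
      by (simp add: power_term bop_entry_add bop_entry_compl_proj bop_entry_op_of_entries)
        (simp add: bop_entry_zero)
    ultimately show ?thesis
      using A that by (simp add: mexp_def g_def summable_sums)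
  qed
  then have "(\<lambda>k. op_of_entries N (g k)) sums op_of_mat N (mexp A)"
    unfolding op_of_mat_def by (rule op_of_entries_sums)
  then have "(\<lambda>k. op_of_mat N A ^ k /\<^sub>R fact k) sums (compl_proj N + op_of_mat N (mexp A))"
    unfolding power_term by (intro sums_add sums_single)
  then show ?thesis
    using exp_converges sums_unique2 by blast
qed

lemma mat_tendsto_of_exp_op_of_mat:
  fixes A B :: "'b \<Rightarrow> complex mat"
  assumes A: "\<And>\<kappa>. A \<kappa> \<in> carrier_mat N N" and B: "\<And>\<kappa>. B \<kappa> \<in> carrier_mat N N"
    and L: "L \<in> carrier_mat N N"
    and lim: "((\<lambda>\<kappa>. exp (op_of_mat N (A \<kappa>)) * exp (op_of_mat N (B \<kappa>))) \<longlongrightarrow> exp (op_of_mat N L)) F"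
  shows "mat_tendsto N (\<lambda>\<kappa>. mexp (A \<kappa>) * mexp (B \<kappa>)) (mexp L) F"
  unfolding mat_tendsto_def
proof (intro allI impI)
  fix i j assume ij: "i < N" "j < N"
  have entry: "bop_entry i j (compl_proj N + op_of_mat N M) = M $$ (i, j)" for M
    using ij by (simp add: bop_entry_add bop_entry_compl_proj op_of_mat_def bop_entry_op_of_entries)
  have mexp_carrier: "mexp M \<in> carrier_mat N N" if "M \<in> carrier_mat N N" for M
    using that by (simp add: mexp_def)
  have "exp (op_of_mat N (A \<kappa>)) * exp (op_of_mat N (B \<kappa>))
      = (compl_proj N + op_of_mat N (mexp (A \<kappa>))) * (compl_proj N + op_of_mat N (mexp (B \<kappa>)))" for \<kappa>
    using A B by (simp add: exp_op_of_mat)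
  also have "\<dots> \<kappa> = compl_proj N + op_of_mat N (mexp (A \<kappa>)) * op_of_mat N (mexp (B \<kappa>))" for \<kappa>
    by (simp add: algebra_simps compl_proj_idem op_of_mat_def compl_proj_mult mult_compl_proj)
  also have "\<dots> \<kappa> = compl_proj N + op_of_mat N (mexp (A \<kappa>) * mexp (B \<kappa>))" for \<kappa>
    using A B by (simp add: op_of_mat_mult mexp_carrier)
  finally have exp_mult: "exp (op_of_mat N (A \<kappa>)) * exp (op_of_mat N (B \<kappa>))
      = compl_proj N + op_of_mat N (mexp (A \<kappa>) * mexp (B \<kappa>))" for \<kappa> .
  from bounded_linear.tendsto[OF bounded_linear_bop_entry lim, of i j]
  show "((\<lambda>\<kappa>. (mexp (A \<kappa>) * mexp (B \<kappa>)) $$ (i, j)) \<longlongrightarrow> mexp L $$ (i, j)) F"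
    using L by (simp add: exp_mult exp_op_of_mat entry)
qed

definition imag_op :: "nat \<Rightarrow> bop"
  where "imag_op N = op_of_entries N (\<lambda>a b. if a = b then \<i> else 0)"

lemma imag_op_mult: "A \<in> carrier_mat N N \<Longrightarrow> imag_op N * op_of_mat N A = op_of_mat N (\<i> \<cdot>\<^sub>m A)"
  unfolding imag_op_def op_of_mat_def op_of_entries_mult
  by (rule op_of_entries_cong) (simp add: if_distrib[of "\<lambda>x. x * _"] cong: if_cong)

lemma mult_imag_op: "A \<in> carrier_mat N N \<Longrightarrow> op_of_mat N A * imag_op N = op_of_mat N (\<i> \<cdot>\<^sub>m A)"
  unfolding imag_op_def op_of_mat_def op_of_entries_mult
  by (rule op_of_entries_cong) (simp add: if_distrib[of "(*) _"] mult.commute cong: if_cong)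

lemma imag_op_mult_imag_op_mult:
  assumes "A \<in> carrier_mat N N"
  shows "imag_op N * (imag_op N * op_of_mat N A) = - op_of_mat N A"
proof -
  have "imag_op N * (imag_op N * op_of_mat N A) = op_of_entries N (\<lambda>i j. - A $$ (i, j))"
    unfolding imag_op_mult[OF assms] imag_op_mult[OF smult_carrier_mat[OF assms]]
    unfolding op_of_mat_def
    by (rule op_of_entries_cong) (use assms in simp)
  then show ?thesis
    by (simp add: op_of_entries_uminus op_of_mat_def)
qed

lemma op_of_mat_imag_affine:
  assumes "A \<in> carrier_mat N N" "B \<in> carrier_mat N N"
  shows "op_of_mat N (\<i> \<cdot>\<^sub>m (complex_of_real r \<cdot>\<^sub>m A + B)) = r *\<^sub>R op_of_mat N (\<i> \<cdot>\<^sub>m A) + op_of_mat N (\<i> \<cdot>\<^sub>m B)"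
  unfolding op_of_mat_def op_of_entries_scaleR[symmetric] op_of_entries_add[symmetric]
  by (rule op_of_entries_cong) (use assms in \<open>simp add: algebra_simps\<close>)

lemma op_of_mat_neg_imag_smult:
  assumes "A \<in> carrier_mat N N"
  shows "op_of_mat N (- (\<i> * complex_of_real r) \<cdot>\<^sub>m A) = - (r *\<^sub>R op_of_mat N (\<i> \<cdot>\<^sub>m A))"
proof -
  have "op_of_mat N (- (\<i> * complex_of_real r) \<cdot>\<^sub>m A) = (- r) *\<^sub>R op_of_mat N (\<i> \<cdot>\<^sub>m A)"
    unfolding op_of_mat_def op_of_entries_scaleR[symmetric]
    by (rule op_of_entries_cong) (use assms in simp)
  then show ?thesis
    by simp
qed

lemma imag_op_commute: "A \<in> carrier_mat N N \<Longrightarrow> imag_op N * op_of_mat N A = op_of_mat N A * imag_op N"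
  by (simp add: imag_op_mult mult_imag_op)

theorem lemma4:
  fixes N m :: nat
    and X Z :: "complex mat"
    and lam :: "nat \<Rightarrow> real"
    and P :: "nat \<Rightarrow> complex mat"
  assumes X_carrier: "X \<in> carrier_mat N N"
    and Z_carrier: "Z \<in> carrier_mat N N"
    and X_herm: "hermitian_mat X"
    and P_carrier: "\<And>j. j < m \<Longrightarrow> P j \<in> carrier_mat N N"
    and P_herm: "\<And>j. j < m \<Longrightarrow> hermitian_mat (P j)"
    and P_idem: "\<And>j. j < m \<Longrightarrow> P j * P j = P j"
    and P_nonzero: "\<And>j. j < m \<Longrightarrow> P j \<noteq> 0\<^sub>m N N"
    and P_orth: "\<And>j k. j < m \<Longrightarrow> k < m \<Longrightarrow> j \<noteq> k \<Longrightarrow> P j * P k = 0\<^sub>m N N"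
    and P_complete: "msum N P {..<m} = 1\<^sub>m N"
    and lam_distinct: "inj_on lam {..<m}"
    and X_spectral: "X = msum N (\<lambda>j. complex_of_real (lam j) \<cdot>\<^sub>m P j) {..<m}"
  shows "mat_tendsto N
           (\<lambda>\<kappa>::real. mexp (- (\<i> * complex_of_real \<kappa>) \<cdot>\<^sub>m X)
                        * mexp (\<i> \<cdot>\<^sub>m (complex_of_real \<kappa> \<cdot>\<^sub>m X + Z)))
           (mexp (\<i> \<cdot>\<^sub>m msum N (\<lambda>j. P j * Z * P j) {..<m}))
           at_top"
proof -
  define p where "p l = op_of_mat N (P l)" for l
  define y where "y = op_of_mat N Z"
  define J where "J = imag_op N"
  define x where "x = J * (\<Sum>l<m. lam l *\<^sub>R p l)"
  define D where "D = msum N (\<lambda>j. P j * Z * P j) {..<m}"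
  have D_carrier: "D \<in> carrier_mat N N"
    by (simp add: D_def msum_def)
  have P_carrier': "\<And>j. j \<in> {..<m} \<Longrightarrow> P j \<in> carrier_mat N N"
    by (simp add: P_carrier)
  have p_orth: "p l * p l' = (if l = l' then p l else 0)" if "l < m" "l' < m" for l l'
    using that P_idem P_orth by (simp add: p_def P_carrier op_of_mat_zero flip: op_of_mat_mult)
  have "(\<Sum>l<m. p l) * y * (\<Sum>l<m. p l) = y"
    using P_complete Z_carrier by (simp add: p_def y_def flip: op_of_mat_msum op_of_mat_mult)
  moreover have "J * p l = p l * J" and "J * J * p l = - p l" if "l < m" for l
    using P_carrier[OF that]
    by (simp add: J_def p_def imag_op_commute, simp add: J_def p_def imag_op_mult_imag_op_mult mult.assoc)
  ultimately have lim: "((\<lambda>\<kappa>. exp (- (\<kappa> *\<^sub>R x)) * exp (\<kappa> *\<^sub>R x + J * y))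
      \<longlongrightarrow> exp (J * (\<Sum>l<m. p l * y * p l))) at_top"
    unfolding x_def using p_orth lam_distinct Z_carrier
    by (intro exp_interaction_tendsto_pinching) (simp_all add: J_def y_def imag_op_commute)
  have "op_of_mat N X = (\<Sum>l<m. lam l *\<^sub>R p l)"
    unfolding p_def by (subst X_spectral) (rule op_of_mat_msum_smult_of_real[OF P_carrier'])
  then have x: "op_of_mat N (\<i> \<cdot>\<^sub>m X) = x"
    unfolding x_def J_def by (metis imag_op_mult[OF X_carrier])
  have "op_of_mat N D = (\<Sum>l<m. p l * y * p l)"
    unfolding D_def p_def y_def by (rule op_of_mat_msum_sandwich[OF P_carrier' Z_carrier])
  then have d: "op_of_mat N (\<i> \<cdot>\<^sub>m D) = J * (\<Sum>l<m. p l * y * p l)"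
    unfolding J_def by (metis imag_op_mult[OF D_carrier])
  have "op_of_mat N (- (\<i> * complex_of_real \<kappa>) \<cdot>\<^sub>m X) = - (\<kappa> *\<^sub>R x)"
    and "op_of_mat N (\<i> \<cdot>\<^sub>m (complex_of_real \<kappa> \<cdot>\<^sub>m X + Z)) = \<kappa> *\<^sub>R x + J * y" for \<kappa>
    using X_carrier Z_carrier imag_op_mult[OF Z_carrier]
    by (simp_all add: op_of_mat_neg_imag_smult op_of_mat_imag_affine x J_def y_def)
  with lim d show ?thesis
    unfolding D_def[symmetric]
    by (intro mat_tendsto_of_exp_op_of_mat) (simp_all add: X_carrier Z_carrier D_carrier)
qed

end
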